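(* Let $\mathcal O$ be an $N_\infty$ operad for the finite group $G$, and let $K\le H\le G$. If the $H$-set $H/K$ is admissible for $\mathcal O$ and the finite $K$-set $T$ is admissible for $\mathcal O$, then the induced $H$-set $H\times_K T$ is admissible for $\mathcal O$.
   Context: A $G$-operad $\mathcal O$ consists of $G\times\Sigma_n$-spaces $\mathcal O_n$ ($n\ge0$), a $G$-fixed identity $1\in\mathcal O_1$ and $G$-equivariant composition maps $\mathcal O_k\times\mathcal O_{n_1}\times\cdots\times\mathcal O_{n_k}\to\mathcal O_{n_1+\cdots+n_k}$ satisfying the usual operad axioms (associativity, unit, equivariance for symmetric groups). A family of subgroups is a set of subgroups closed under subgroups and conjugation; a universal space for a family $\mathcal F$ of subgroups of $\Pi$ is a $\Pi$-space whose $\Gamma$-fixed points are contractible for $\Gamma\in\mathcal F$ and empty otherwise. An $N_\infty$ operad is a $G$-operad with $\mathcal O_0$ $G$-contractible, $\Sigma_n$ acting freely on $\mathcal O_n$, and $\mathcal O_n$ a universal space for a family $\mathcal F_n(\mathcal O)$ of subgroups of $G\times\Sigma_n$ containing all $H\times\{1\}$. For $L\le G$ and a finite $L$-set $T$ with $|T|=n$, choosing $T\cong\{1,\dots,n\}$ gives a homomorphism $L\to\Sigma_n$ with graph $\Gamma_T\le G\times\Sigma_n$ (well defined up to $\Sigma_n$-conjugacy); $T$ is admissible for $\mathcal O$ if $\mathcal O_n^{\Gamma_T}\neq\emptyset$. *)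

theory Defs
  imports "HOL-Analysis.Analysis" "HOL-Algebra.Group" "HOL-Algebra.Coset"
begin

definition Sym :: "nat \<Rightarrow> (nat \<Rightarrow> nat) monoid" where
  "Sym n = \<lparr>carrier = {p. p permutes {..<n}}, mult = (\<circ>), one = id\<rparr>"

definition top_action :: "('p, 'm) monoid_scheme \<Rightarrow> 'a topology \<Rightarrow> ('p \<Rightarrow> 'a \<Rightarrow> 'a) \<Rightarrow> bool" where
  "top_action PP X act \<longleftrightarrow>
     (\<forall>g\<in>carrier PP. continuous_map X X (act g)) \<and>
     (\<forall>x\<in>topspace X. act \<one>\<^bsub>PP\<^esub> x = x) \<and>
     (\<forall>g\<in>carrier PP. \<forall>h\<in>carrier PP. \<forall>x\<in>topspace X. act (g \<otimes>\<^bsub>PP\<^esub> h) x = act g (act h x))"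

definition fixset :: "'p set \<Rightarrow> ('p \<Rightarrow> 'a \<Rightarrow> 'a) \<Rightarrow> 'a topology \<Rightarrow> 'a set" where
  "fixset Gam act X = {x \<in> topspace X. \<forall>g\<in>Gam. act g x = x}"

definition family_of_subgroups :: "('p, 'm) monoid_scheme \<Rightarrow> 'p set set \<Rightarrow> bool" where
  "family_of_subgroups PP F \<longleftrightarrow>
     (\<forall>Gam\<in>F. subgroup Gam PP) \<and>
     (\<forall>Gam\<in>F. \<forall>Gam'. subgroup Gam' PP \<and> Gam' \<subseteq> Gam \<longrightarrow> Gam' \<in> F) \<and>
     (\<forall>Gam\<in>F. \<forall>p\<in>carrier PP. (\<lambda>g. p \<otimes>\<^bsub>PP\<^esub> g \<otimes>\<^bsub>PP\<^esub> inv\<^bsub>PP\<^esub> p) ` Gam \<in> F)"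

definition universal_space :: "('p, 'm) monoid_scheme \<Rightarrow> 'p set set \<Rightarrow> 'a topology \<Rightarrow> ('p \<Rightarrow> 'a \<Rightarrow> 'a) \<Rightarrow> bool" where
  "universal_space PP F X act \<longleftrightarrow>
     (\<forall>Gam. subgroup Gam PP \<longrightarrow>
        (Gam \<in> F \<longrightarrow> fixset Gam act X \<noteq> {} \<and> contractible_space (subtopology X (fixset Gam act X))) \<and>
        (Gam \<notin> F \<longrightarrow> fixset Gam act X = {}))"

text \<open>G-contractible: equivariantly homotopy equivalent to a point, i.e. there is a G-fixed point
  and an equivariant homotopy from the identity to the constant map at it.\<close>
definition G_contractible :: "('g, 'm) monoid_scheme \<Rightarrow> 'a topology \<Rightarrow> ('g \<Rightarrow> 'a \<Rightarrow> 'a) \<Rightarrow> bool" where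
  "G_contractible G X act \<longleftrightarrow>
     (\<exists>a\<in>topspace X. (\<forall>g\<in>carrier G. act g a = a) \<and>
        homotopic_with (\<lambda>f. \<forall>g\<in>carrier G. \<forall>x\<in>topspace X. f (act g x) = act g (f x))
           X X id (\<lambda>x. a))"

definition off :: "nat list \<Rightarrow> nat \<Rightarrow> nat" where
  "off ns i = sum_list (take i ns)"

definition blk :: "nat list \<Rightarrow> nat \<Rightarrow> nat" where
  "blk ns p = (LEAST i. p < off ns (Suc i))"

definition block_sum :: "nat list \<Rightarrow> (nat \<Rightarrow> nat \<Rightarrow> nat) \<Rightarrow> nat \<Rightarrow> nat" where
  "block_sum ns taus p =
     (if p < sum_list ns then off ns (blk ns p) + taus (blk ns p) (p - off ns (blk ns p)) else p)"

definition permute_list :: "nat list \<Rightarrow> (nat \<Rightarrow> nat) \<Rightarrow> nat list" where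
  "permute_list ns s = map (\<lambda>j. ns ! s j) [0..<length ns]"

text \<open>Block permutation: position p in the layout of (permute_list ns s), lying in block j at
  offset r, goes to position off ns (s j) + r in the layout of ns.\<close>
definition block_perm :: "nat list \<Rightarrow> (nat \<Rightarrow> nat) \<Rightarrow> nat \<Rightarrow> nat" where
  "block_perm ns s p =
     (let ns' = permute_list ns s in
      if p < sum_list ns' then off ns (s (blk ns' p)) + (p - off ns' (blk ns' p)) else p)"

text \<open>A G-operad: spaces Op n (all carried by one type 'a), continuous actions act n of G x Sym n,
  identity e, composition maps gamma ns : Op k x Op (ns!0) x ... x Op (ns!(k-1)) \<rightarrow> Op (sum ns),
  where k = length ns and the tuple of inputs is an extensional function on {..<k}.
  Convention for Sym-actions: an operation with k inputs behaves like a function f(a_0..a_{k-1}),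
  and (s.f)(a_0,..,a_{k-1}) = f(a_{s 0},..,a_{s (k-1)}).\<close>
definition G_operad ::
  "('g, 'm) monoid_scheme \<Rightarrow> (nat \<Rightarrow> 'a topology) \<Rightarrow> (nat \<Rightarrow> 'g \<times> (nat \<Rightarrow> nat) \<Rightarrow> 'a \<Rightarrow> 'a)
     \<Rightarrow> 'a \<Rightarrow> (nat list \<Rightarrow> 'a \<Rightarrow> (nat \<Rightarrow> 'a) \<Rightarrow> 'a) \<Rightarrow> bool" where
  "G_operad G Op act e gamma \<longleftrightarrow>
     group G \<and>
     (\<forall>n. top_action (G \<times>\<times> Sym n) (Op n) (act n)) \<and>
     \<comment> \<open>identity\<close>
     e \<in> topspace (Op 1) \<and> (\<forall>g\<in>carrier G. act 1 (g, id) e = e) \<and>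
     \<comment> \<open>composition maps are continuous maps into the right space\<close>
     (\<forall>ns. continuous_map
              (prod_topology (Op (length ns)) (product_topology (\<lambda>i. Op (ns ! i)) {..<length ns}))
              (Op (sum_list ns)) (\<lambda>(x, ys). gamma ns x ys)) \<and>
     \<comment> \<open>G-equivariance\<close>
     (\<forall>ns x ys g. x \<in> topspace (Op (length ns)) \<and> ys \<in> (PiE {..<length ns} (\<lambda>i. topspace (Op (ns ! i))))
        \<and> g \<in> carrier G \<longrightarrow>
        gamma ns (act (length ns) (g, id) x) (\<lambda>i\<in>{..<length ns}. act (ns ! i) (g, id) (ys i))
          = act (sum_list ns) (g, id) (gamma ns x ys)) \<and>
     \<comment> \<open>associativity\<close>
     (\<forall>ns ms x ys zs. length ms = sum_list ns \<and> x \<in> topspace (Op (length ns)) \<and>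
        ys \<in> (PiE {..<length ns} (\<lambda>i. topspace (Op (ns ! i)))) \<and>
        zs \<in> (PiE {..<length ms} (\<lambda>j. topspace (Op (ms ! j)))) \<longrightarrow>
        gamma ms (gamma ns x ys) zs =
        gamma (map (\<lambda>i. sum_list (take (ns ! i) (drop (off ns i) ms))) [0..<length ns]) x
          (\<lambda>i\<in>{..<length ns}. gamma (take (ns ! i) (drop (off ns i) ms)) (ys i)
                                 (\<lambda>j\<in>{..<ns ! i}. zs (off ns i + j)))) \<and>
     \<comment> \<open>unit laws\<close>
     (\<forall>n y. y \<in> topspace (Op n) \<longrightarrow> gamma [n] e (\<lambda>i\<in>{..<1}. y) = y) \<and>
     (\<forall>k x. x \<in> topspace (Op k) \<longrightarrow> gamma (replicate k 1) x (\<lambda>i\<in>{..<k}. e) = x) \<and>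
     \<comment> \<open>equivariance for the symmetric groups: permuting the inputs\<close>
     (\<forall>ns x ys s. x \<in> topspace (Op (length ns)) \<and> ys \<in> (PiE {..<length ns} (\<lambda>i. topspace (Op (ns ! i))))
        \<and> s permutes {..<length ns} \<longrightarrow>
        gamma ns (act (length ns) (\<one>\<^bsub>G\<^esub>, s) x) ys
          = act (sum_list ns) (\<one>\<^bsub>G\<^esub>, block_perm ns s) (gamma (permute_list ns s) x (\<lambda>j. ys (s j)))) \<and>
     \<comment> \<open>equivariance for the symmetric groups: block sums\<close>
     (\<forall>ns x ys taus. x \<in> topspace (Op (length ns)) \<and> ys \<in> (PiE {..<length ns} (\<lambda>i. topspace (Op (ns ! i))))
        \<and> (\<forall>i<length ns. taus i permutes {..<ns ! i}) \<longrightarrow>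
        gamma ns x (\<lambda>i\<in>{..<length ns}. act (ns ! i) (\<one>\<^bsub>G\<^esub>, taus i) (ys i))
          = act (sum_list ns) (\<one>\<^bsub>G\<^esub>, block_sum ns taus) (gamma ns x ys))"

definition N_infty_operad ::
  "('g, 'm) monoid_scheme \<Rightarrow> (nat \<Rightarrow> 'a topology) \<Rightarrow> (nat \<Rightarrow> 'g \<times> (nat \<Rightarrow> nat) \<Rightarrow> 'a \<Rightarrow> 'a)
     \<Rightarrow> 'a \<Rightarrow> (nat list \<Rightarrow> 'a \<Rightarrow> (nat \<Rightarrow> 'a) \<Rightarrow> 'a) \<Rightarrow> bool" where
  "N_infty_operad G Op act e gamma \<longleftrightarrow>
     G_operad G Op act e gamma \<and>
     G_contractible G (Op 0) (\<lambda>g. act 0 (g, id)) \<and>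
     (\<forall>n. \<forall>s\<in>carrier (Sym n). \<forall>x\<in>topspace (Op n). act n (\<one>\<^bsub>G\<^esub>, s) x = x \<longrightarrow> s = id) \<and>
     (\<forall>n. \<exists>F. family_of_subgroups (G \<times>\<times> Sym n) F \<and>
            (\<forall>H. subgroup H G \<longrightarrow> H \<times> {id} \<in> F) \<and>
            universal_space (G \<times>\<times> Sym n) F (Op n) (act n))"

definition set_action :: "('g, 'm) monoid_scheme \<Rightarrow> 'g set \<Rightarrow> 'b set \<Rightarrow> ('g \<Rightarrow> 'b \<Rightarrow> 'b) \<Rightarrow> bool" where
  "set_action G L T tact \<longleftrightarrow>
     (\<forall>l\<in>L. \<forall>t\<in>T. tact l t \<in> T) \<and>
     (\<forall>t\<in>T. tact \<one>\<^bsub>G\<^esub> t = t) \<and>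
     (\<forall>l\<in>L. \<forall>l'\<in>L. \<forall>t\<in>T. tact (l \<otimes>\<^bsub>G\<^esub> l') t = tact l (tact l' t))"

text \<open>Given a bijection f : T \<rightarrow> {..<n}, the homomorphism L \<rightarrow> Sym n and its graph.\<close>
definition perm_via :: "'b set \<Rightarrow> ('b \<Rightarrow> nat) \<Rightarrow> ('g \<Rightarrow> 'b \<Rightarrow> 'b) \<Rightarrow> 'g \<Rightarrow> nat \<Rightarrow> nat" where
  "perm_via T f tact l = (\<lambda>p. if p < card T then f (tact l (inv_into T f p)) else p)"

definition graph_of :: "'g set \<Rightarrow> 'b set \<Rightarrow> ('b \<Rightarrow> nat) \<Rightarrow> ('g \<Rightarrow> 'b \<Rightarrow> 'b) \<Rightarrow> ('g \<times> (nat \<Rightarrow> nat)) set" where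
  "graph_of L T f tact = {(l, perm_via T f tact l) | l. l \<in> L}"

definition admissible ::
  "(nat \<Rightarrow> 'a topology) \<Rightarrow> (nat \<Rightarrow> 'g \<times> (nat \<Rightarrow> nat) \<Rightarrow> 'a \<Rightarrow> 'a)
     \<Rightarrow> 'g set \<Rightarrow> 'b set \<Rightarrow> ('g \<Rightarrow> 'b \<Rightarrow> 'b) \<Rightarrow> bool" where
  "admissible Op act L T tact \<longleftrightarrow>
     (\<exists>f. bij_betw f T {..<card T} \<and>
          fixset (graph_of L T f tact) (act (card T)) (Op (card T)) \<noteq> {})"

definition coset_set :: "('g, 'm) monoid_scheme \<Rightarrow> 'g set \<Rightarrow> 'g set \<Rightarrow> 'g set set" where
  "coset_set G H K = {a <#\<^bsub>G\<^esub> K | a. a \<in> H}"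

definition coset_act :: "('g, 'm) monoid_scheme \<Rightarrow> 'g \<Rightarrow> 'g set \<Rightarrow> 'g set" where
  "coset_act G h C = h <#\<^bsub>G\<^esub> C"

text \<open>H \<times>_K T = (H \<times> T)/K, where k.(h,t) = (h k^-1, k t); elements are the K-orbits.\<close>
definition ind_class :: "('g, 'm) monoid_scheme \<Rightarrow> 'g set \<Rightarrow> ('g \<Rightarrow> 'b \<Rightarrow> 'b) \<Rightarrow> 'g \<Rightarrow> 'b \<Rightarrow> ('g \<times> 'b) set" where
  "ind_class G K tact h t = {(h \<otimes>\<^bsub>G\<^esub> inv\<^bsub>G\<^esub> k, tact k t) | k. k \<in> K}"

definition ind_set :: "('g, 'm) monoid_scheme \<Rightarrow> 'g set \<Rightarrow> 'g set \<Rightarrow> 'b set \<Rightarrow> ('g \<Rightarrow> 'b \<Rightarrow> 'b) \<Rightarrow> ('g \<times> 'b) set set" where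
  "ind_set G H K T tact = {ind_class G K tact h t | h t. h \<in> H \<and> t \<in> T}"

definition ind_act :: "('g, 'm) monoid_scheme \<Rightarrow> 'g \<Rightarrow> ('g \<times> 'b) set \<Rightarrow> ('g \<times> 'b) set" where
  "ind_act G h' C = (\<lambda>(h, t). (h' \<otimes>\<^bsub>G\<^esub> h, t)) ` C"

end

theory Submission
  imports Defs
begin

text \<open>Fix representatives \<open>r\<^sub>i\<close> (\<open>i < m\<close>) of \<open>H/K\<close>, a point \<open>x\<close> of \<open>\<O>\<^sub>m\<close> fixed by
  the graph of \<open>H \<rightarrow> \<Sigma>\<^sub>m\<close> and a point \<open>y\<close> of \<open>\<O>\<^sub>n\<close> fixed by the graph of \<open>K \<rightarrow> \<Sigma>\<^sub>n\<close>.
  Enumerate \<open>H \<times>\<^sub>K T\<close> by \<open>(i, t) \<mapsto> [r\<^sub>i, t]\<close> and write \<open>h r\<^sub>i = r\<^sub>\<sigma>\<^sub>i k\<^sub>i\<close> with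
  \<open>k\<^sub>i \<in> K\<close>; then \<open>h\<close> acts on \<open>H \<times>\<^sub>K T\<close> as the wreath product permutation
  \<open>(i, t) \<mapsto> (\<sigma> i, k\<^sub>i t)\<close>.  The point \<open>\<gamma>(x; r\<^sub>0 y, \<dots>, r\<^sub>m\<^sub>-\<^sub>1 y)\<close> is fixed by \<open>h\<close>
  together with this permutation: by equivariance of \<open>\<gamma>\<close>, acting with \<open>h\<close> amounts to
  acting on \<open>x\<close>, which permutes the inputs by \<open>\<sigma>\<close>, and on each input, where
  \<open>h r\<^sub>i y = r\<^sub>\<sigma>\<^sub>i k\<^sub>i y\<close> and \<open>k\<^sub>i\<close> acts on \<open>y\<close> as its permutation of \<open>T\<close>.  The
  symmetric group axioms turn these into the block permutation \<open>\<sigma>\<close> followed by the block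
  sum of the permutations of the \<open>k\<^sub>i\<close>.\<close>

section \<open>Wreath product permutations\<close>

lemma mult_add_less_mult:
  fixes i u m n :: nat
  assumes "i < m" "u < n"
  shows "i * n + u < m * n"
proof -
  have "Suc i * n \<le> m * n" using assms(1) by (intro mult_le_mono1) simp
  then show ?thesis using assms(2) by simp
qed

lemma less_mult_cases:
  fixes p m n :: nat
  assumes "p < m * n"
  obtains i u where "i < m" "u < n" "p = i * n + u"
proof
  show "p div n < m" using assms by (simp add: less_mult_imp_div_less)
  show "p mod n < n" using assms by (cases n) simp_all
qed simp

lemma mult_add_eq_mult_add_iff:
  fixes i j u v n :: nat
  assumes "u < n" "v < n"
  shows "i * n + u = j * n + v \<longleftrightarrow> i = j \<and> u = v"
  by (metis assms div_mult_self1 div_less mod_mult_self1 mod_less add.commute add_0 less_zeroE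
      neq0_conv)

lemma bij_betw_div_mod:
  fixes m n :: nat
  shows "bij_betw (\<lambda>p. (p div n, p mod n)) {..<m * n} ({..<m} \<times> {..<n})"
proof (rule bij_betw_byWitness[where f' = "\<lambda>(i, u). i * n + u"])
  show "(\<lambda>p. (p div n, p mod n)) ` {..<m * n} \<subseteq> {..<m} \<times> {..<n}"
    by (auto elim!: less_mult_cases)
qed (auto simp: mult_add_less_mult)

text \<open>Identifying \<open>{..<m * n}\<close> with \<open>{..<m} \<times> {..<n}\<close> via \<open>(i, u) \<mapsto> i * n + u\<close>, this is the
  permutation \<open>(i, u) \<mapsto> (\<sigma> i, \<tau> i u)\<close>.\<close>

definition wreath_perm :: "nat \<Rightarrow> nat \<Rightarrow> (nat \<Rightarrow> nat) \<Rightarrow> (nat \<Rightarrow> nat \<Rightarrow> nat) \<Rightarrow> nat \<Rightarrow> nat" where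
  "wreath_perm m n \<sigma> \<tau> p = (if p < m * n then \<sigma> (p div n) * n + \<tau> (p div n) (p mod n) else p)"

lemma wreath_perm_mult_add:
  assumes "i < m" "u < n"
  shows "wreath_perm m n \<sigma> \<tau> (i * n + u) = \<sigma> i * n + \<tau> i u"
  using assms mult_add_less_mult[OF assms] by (simp add: wreath_perm_def)

lemma wreath_perm_outside: "\<not> p < m * n \<Longrightarrow> wreath_perm m n \<sigma> \<tau> p = p"
  by (simp add: wreath_perm_def)

lemma permutes_less: "\<sigma> permutes {..<m} \<Longrightarrow> i < m \<Longrightarrow> \<sigma> i < (m::nat)"
  using permutes_in_image by fastforce

lemma wreath_perm_permutes:
  assumes \<sigma>: "\<sigma> permutes {..<m}" and \<tau>: "\<And>i. i < m \<Longrightarrow> \<tau> i permutes {..<n}"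
  shows "wreath_perm m n \<sigma> \<tau> permutes {..<m * n}"
proof (rule bij_imp_permutes)
  let ?w = "wreath_perm m n \<sigma> \<tau>"
  have into: "?w ` {..<m * n} \<subseteq> {..<m * n}"
  proof
    fix q assume "q \<in> ?w ` {..<m * n}"
    then obtain i u where "i < m" "u < n" "q = ?w (i * n + u)" by (auto elim: less_mult_cases)
    then show "q \<in> {..<m * n}"
      by (simp add: wreath_perm_mult_add mult_add_less_mult permutes_less[OF \<sigma>] permutes_less[OF \<tau>])
  qed
  have "inj_on ?w {..<m * n}"
  proof (rule inj_onI)
    fix p q assume "p \<in> {..<m * n}" "q \<in> {..<m * n}" and eq: "?w p = ?w q"
    then obtain i u j v where ij: "i < m" "j < m" and uv: "u < n" "v < n"
      and pq: "p = i * n + u" "q = j * n + v" by (auto elim!: less_mult_cases)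
    have "\<sigma> i = \<sigma> j \<and> \<tau> i u = \<tau> j v"
      using eq
      unfolding pq wreath_perm_mult_add[OF ij(1) uv(1)] wreath_perm_mult_add[OF ij(2) uv(2)]
      by (simp add: mult_add_eq_mult_add_iff permutes_less[OF \<tau>] ij uv)
    then have "i = j" and "\<tau> i u = \<tau> i v" using permutes_inj[OF \<sigma>] by (auto dest: injD)
    then show "p = q" using permutes_inj[OF \<tau>[OF ij(1)]] pq by (auto dest: injD)
  qed
  with into show "bij_betw ?w {..<m * n} {..<m * n}"
    by (simp add: bij_betw_def endo_inj_surj)
qed (simp add: wreath_perm_outside)

lemma wreath_perm_inverse_factorization:
  assumes \<sigma>: "\<sigma> permutes {..<m}" and \<tau>: "\<And>i. i < m \<Longrightarrow> \<tau> i permutes {..<n}"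
  shows "wreath_perm m n \<sigma> \<tau> (wreath_perm m n id (\<lambda>i. Hilbert_Choice.inv (\<tau> i))
    (wreath_perm m n (Hilbert_Choice.inv \<sigma>) (\<lambda>_. id) p)) = p"
proof (cases "p < m * n")
  case True
  then obtain i u where iu: "i < m" "u < n" "p = i * n + u" by (rule less_mult_cases)
  define j where "j = Hilbert_Choice.inv \<sigma> i"
  have j: "j < m" "\<sigma> j = i" unfolding j_def
    using permutes_less[OF permutes_inv[OF \<sigma>] iu(1)] permutes_inverses(1)[OF \<sigma>] by simp_all
  have "Hilbert_Choice.inv (\<tau> j) u < n" using permutes_less[OF permutes_inv[OF \<tau>[OF j(1)]] iu(2)] .
  then show ?thesis using iu j permutes_inverses(1)[OF \<tau>[OF j(1)]]
    by (simp add: wreath_perm_mult_add j_def[symmetric])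
qed (simp add: wreath_perm_outside)

section \<open>Block permutations for inputs of equal arity\<close>

lemma off_replicate: "i \<le> m \<Longrightarrow> off (replicate m n) i = i * n"
  by (simp add: off_def min_def sum_list_replicate)

lemma blk_replicate:
  assumes "i < m" "u < n"
  shows "blk (replicate m n) (i * n + u) = i"
  unfolding blk_def
proof (rule Least_equality)
  show "i * n + u < off (replicate m n) (Suc i)" using assms by (simp add: off_replicate)
next
  fix j assume "i * n + u < off (replicate m n) (Suc j)"
  moreover have "off (replicate m n) (Suc j) \<le> Suc j * n"
  proof (cases "Suc j \<le> m")
    case False
    then show ?thesis using mult_le_mono1[of m "Suc j" n] by (simp add: off_def sum_list_replicate)
  qed (simp add: off_replicate)
  ultimately have "i * n < Suc j * n" by linarith
  then show "i \<le> j" by (metis less_Suc_eq_le mult_less_cancel2)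
qed

lemma block_sum_replicate: "block_sum (replicate m n) \<tau> = wreath_perm m n id \<tau>"
proof
  fix p show "block_sum (replicate m n) \<tau> p = wreath_perm m n id \<tau> p"
  proof (cases "p < m * n")
    case True
    then obtain i u where "i < m" "u < n" "p = i * n + u" by (rule less_mult_cases)
    then show ?thesis
      by (simp add: block_sum_def blk_replicate off_replicate sum_list_replicate
          wreath_perm_mult_add mult_add_less_mult)
  qed (simp add: block_sum_def sum_list_replicate wreath_perm_outside)
qed

lemma permute_list_replicate: "\<sigma> permutes {..<m} \<Longrightarrow> permute_list (replicate m n) \<sigma> = replicate m n"
  by (simp add: permute_list_def list_eq_iff_nth_eq permutes_less)

lemma block_perm_replicate:
  assumes "\<sigma> permutes {..<m}"
  shows "block_perm (replicate m n) \<sigma> = wreath_perm m n \<sigma> (\<lambda>_. id)"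
proof
  fix p show "block_perm (replicate m n) \<sigma> p = wreath_perm m n \<sigma> (\<lambda>_. id) p"
  proof (cases "p < m * n")
    case True
    then obtain i u where "i < m" "u < n" "p = i * n + u" by (rule less_mult_cases)
    then show ?thesis using permutes_less[OF assms]
      by (simp add: block_perm_def Let_def permute_list_replicate[OF assms] blk_replicate
          off_replicate sum_list_replicate wreath_perm_mult_add mult_add_less_mult less_imp_le)
  qed (simp add: block_perm_def permute_list_replicate[OF assms] sum_list_replicate
      wreath_perm_outside)
qed

section \<open>Equal-arity composition in a \<open>G\<close>-operad\<close>

lemma Sym_simps [simp]:
  "carrier (Sym n) = {p. p permutes {..<n}}" "mult (Sym n) = (\<circ>)" "one (Sym n) = id"
  by (simp_all add: Sym_def)

lemma top_action_mult:
  "top_action P X a \<Longrightarrow> g \<in> carrier P \<Longrightarrow> h \<in> carrier P \<Longrightarrow> x \<in> topspace X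
    \<Longrightarrow> a (g \<otimes>\<^bsub>P\<^esub> h) x = a g (a h x)"
  unfolding top_action_def by blast

lemma top_action_closed: "top_action P X a \<Longrightarrow> g \<in> carrier P \<Longrightarrow> x \<in> topspace X \<Longrightarrow> a g x \<in> topspace X"
  unfolding top_action_def using continuous_map_image_subset_topspace by blast

lemma top_action_one: "top_action P X a \<Longrightarrow> x \<in> topspace X \<Longrightarrow> a \<one>\<^bsub>P\<^esub> x = x"
  unfolding top_action_def by blast

lemma PiE_replicate: "PiE {..<m} (\<lambda>i. A (replicate m n ! i)) = PiE {..<m} (\<lambda>_. A n)"
  by (rule PiE_cong) simp

lemma G_operad_group: "G_operad G Op act e gamma \<Longrightarrow> group G"
  by (simp add: G_operad_def)

lemma G_operad_top_action: "G_operad G Op act e gamma \<Longrightarrow> top_action (G \<times>\<times> Sym n) (Op n) (act n)"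
  by (simp add: G_operad_def)

lemma G_operad_gamma_continuous:
  "G_operad G Op act e gamma \<Longrightarrow> continuous_map
     (prod_topology (Op (length ns)) (product_topology (\<lambda>i. Op (ns ! i)) {..<length ns}))
     (Op (sum_list ns)) (\<lambda>(x, ys). gamma ns x ys)"
  unfolding G_operad_def by (elim conjE) meson

lemma G_operad_gamma_G_equivariant:
  "G_operad G Op act e gamma \<Longrightarrow> x \<in> topspace (Op (length ns))
    \<Longrightarrow> ys \<in> PiE {..<length ns} (\<lambda>i. topspace (Op (ns ! i))) \<Longrightarrow> g \<in> carrier G
    \<Longrightarrow> gamma ns (act (length ns) (g, id) x) (\<lambda>i\<in>{..<length ns}. act (ns ! i) (g, id) (ys i))
      = act (sum_list ns) (g, id) (gamma ns x ys)"
  unfolding G_operad_def by (elim conjE) meson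

lemma G_operad_gamma_permute:
  "G_operad G Op act e gamma \<Longrightarrow> x \<in> topspace (Op (length ns))
    \<Longrightarrow> ys \<in> PiE {..<length ns} (\<lambda>i. topspace (Op (ns ! i))) \<Longrightarrow> s permutes {..<length ns}
    \<Longrightarrow> gamma ns (act (length ns) (\<one>\<^bsub>G\<^esub>, s) x) ys
      = act (sum_list ns) (\<one>\<^bsub>G\<^esub>, block_perm ns s) (gamma (permute_list ns s) x (\<lambda>j. ys (s j)))"
  unfolding G_operad_def by (elim conjE) meson

lemma G_operad_gamma_block_sum:
  "G_operad G Op act e gamma \<Longrightarrow> x \<in> topspace (Op (length ns))
    \<Longrightarrow> ys \<in> PiE {..<length ns} (\<lambda>i. topspace (Op (ns ! i)))
    \<Longrightarrow> (\<forall>i<length ns. taus i permutes {..<ns ! i})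
    \<Longrightarrow> gamma ns x (\<lambda>i\<in>{..<length ns}. act (ns ! i) (\<one>\<^bsub>G\<^esub>, taus i) (ys i))
      = act (sum_list ns) (\<one>\<^bsub>G\<^esub>, block_sum ns taus) (gamma ns x ys)"
  unfolding G_operad_def by (elim conjE) meson

lemma top_action_translate_fixed_point:
  assumes "group G" "top_action (G \<times>\<times> Sym n) X a" "y \<in> topspace X"
    and "k \<in> carrier G" "\<tau> permutes {..<n}" "a (k, \<tau>) y = y"
    and "g \<in> carrier G" "b \<in> carrier G" "b' \<in> carrier G" "g \<otimes>\<^bsub>G\<^esub> b = b' \<otimes>\<^bsub>G\<^esub> k"
  shows "a (g, \<tau>) (a (b, id) y) = a (b', id) y"
proof -
  have "a (g, \<tau>) (a (b, id) y) = a ((g, \<tau>) \<otimes>\<^bsub>G \<times>\<times> Sym n\<^esub> (b, id)) y"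
    using top_action_mult[OF assms(2), of "(g, \<tau>)" "(b, id)" y] assms by simp
  also have "(g, \<tau>) \<otimes>\<^bsub>G \<times>\<times> Sym n\<^esub> (b, id) = (b', id) \<otimes>\<^bsub>G \<times>\<times> Sym n\<^esub> (k, \<tau>)"
    using assms(10) by simp
  also have "a \<dots> y = a (b', id) y"
    using top_action_mult[OF assms(2), of "(b', id)" "(k, \<tau>)" y] assms by simp
  finally show ?thesis .
qed

lemma top_action_drop_perm:
  assumes "group G" "top_action (G \<times>\<times> Sym k) X a"
    and "g \<in> carrier G" "\<pi> permutes {..<k}" "w \<in> topspace X"
  shows "a (g, id) w = a (\<one>\<^bsub>G\<^esub>, Hilbert_Choice.inv \<pi>) (a (g, \<pi>) w)"
proof -
  interpret group G by fact
  show ?thesis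
    using top_action_mult[OF assms(2), of "(\<one>\<^bsub>G\<^esub>, Hilbert_Choice.inv \<pi>)" "(g, \<pi>)" w] assms(3-)
    by (simp add: permutes_inv permutes_inv_o)
qed

context
  fixes G :: "('g, 'm) monoid_scheme" and Op :: "nat \<Rightarrow> 'a topology"
    and act :: "nat \<Rightarrow> 'g \<times> (nat \<Rightarrow> nat) \<Rightarrow> 'a \<Rightarrow> 'a" and e :: 'a
    and gamma :: "nat list \<Rightarrow> 'a \<Rightarrow> (nat \<Rightarrow> 'a) \<Rightarrow> 'a"
  assumes operad: "G_operad G Op act e gamma"
begin

lemma gamma_replicate_closed:
  assumes "x \<in> topspace (Op m)" "ys \<in> PiE {..<m} (\<lambda>_. topspace (Op n))"
  shows "gamma (replicate m n) x ys \<in> topspace (Op (m * n))"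
  using continuous_map_image_subset_topspace[OF G_operad_gamma_continuous[OF operad, of "replicate m n"]]
    assms
  by (force simp: PiE_replicate[where A = "\<lambda>k. topspace (Op k)"] sum_list_replicate mult.commute)

lemma gamma_replicate_G_equivariant:
  assumes "x \<in> topspace (Op m)" "ys \<in> PiE {..<m} (\<lambda>_. topspace (Op n))" "g \<in> carrier G"
  shows "gamma (replicate m n) (act m (g, id) x) (\<lambda>i\<in>{..<m}. act n (g, id) (ys i))
    = act (m * n) (g, id) (gamma (replicate m n) x ys)"
  using G_operad_gamma_G_equivariant[OF operad, of x "replicate m n" ys g] assms
  by (simp add: PiE_replicate[where A = "\<lambda>k. topspace (Op k)"] sum_list_replicate mult.commute
      cong: restrict_cong)

lemma gamma_replicate_permute:
  assumes "x \<in> topspace (Op m)" "ys \<in> PiE {..<m} (\<lambda>_. topspace (Op n))" "\<sigma> permutes {..<m}"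
  shows "gamma (replicate m n) (act m (\<one>\<^bsub>G\<^esub>, \<sigma>) x) ys
    = act (m * n) (\<one>\<^bsub>G\<^esub>, wreath_perm m n \<sigma> (\<lambda>_. id)) (gamma (replicate m n) x (\<lambda>j. ys (\<sigma> j)))"
  using G_operad_gamma_permute[OF operad, of x "replicate m n" ys \<sigma>] assms
  by (simp add: PiE_replicate[where A = "\<lambda>k. topspace (Op k)"] sum_list_replicate mult.commute
      block_perm_replicate permute_list_replicate)

lemma gamma_replicate_block_sum:
  assumes "x \<in> topspace (Op m)" "ys \<in> PiE {..<m} (\<lambda>_. topspace (Op n))"
    and "\<And>i. i < m \<Longrightarrow> \<tau> i permutes {..<n}"
  shows "gamma (replicate m n) x (\<lambda>i\<in>{..<m}. act n (\<one>\<^bsub>G\<^esub>, \<tau> i) (ys i))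
    = act (m * n) (\<one>\<^bsub>G\<^esub>, wreath_perm m n id \<tau>) (gamma (replicate m n) x ys)"
  using G_operad_gamma_block_sum[OF operad, of x "replicate m n" ys \<tau>] assms
  by (simp add: PiE_replicate[where A = "\<lambda>k. topspace (Op k)"] sum_list_replicate mult.commute
      block_sum_replicate cong: restrict_cong)

lemma gamma_replicate_G_act_eq_Sym_act:
  assumes g: "g \<in> carrier G" and \<sigma>: "\<sigma> permutes {..<m}" and \<tau>: "\<And>i. i < m \<Longrightarrow> \<tau> i permutes {..<n}"
    and x: "x \<in> topspace (Op m)" "act m (g, \<sigma>) x = x"
    and ys: "ys \<in> PiE {..<m} (\<lambda>_. topspace (Op n))" "\<And>i. i < m \<Longrightarrow> act n (g, \<tau> i) (ys i) = ys (\<sigma> i)"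
  shows "act (m * n) (g, id) (gamma (replicate m n) x ys)
    = act (m * n) (\<one>\<^bsub>G\<^esub>, wreath_perm m n id (\<lambda>i. Hilbert_Choice.inv (\<tau> i)))
        (act (m * n) (\<one>\<^bsub>G\<^esub>, wreath_perm m n (Hilbert_Choice.inv \<sigma>) (\<lambda>_. id))
          (gamma (replicate m n) x ys))"
proof -
  let ?\<gamma> = "gamma (replicate m n)" and ?N = "m * n"
  let ?\<sigma>' = "Hilbert_Choice.inv \<sigma>" and ?\<tau>' = "\<lambda>i. Hilbert_Choice.inv (\<tau> i)"
  note grp = G_operad_group[OF operad] and top = G_operad_top_action[OF operad]
  define Y where "Y = (\<lambda>i\<in>{..<m}. ys (\<sigma> i))"
  have Y: "Y \<in> PiE {..<m} (\<lambda>_. topspace (Op n))"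
    using ys(1) permutes_less[OF \<sigma>] by (auto simp: Y_def)
  have x': "act m (\<one>\<^bsub>G\<^esub>, ?\<sigma>') x \<in> topspace (Op m)"
    using top_action_closed[OF top _ x(1)] permutes_inv[OF \<sigma>] group.is_monoid[OF grp] by simp
  have "(\<lambda>i\<in>{..<m}. act n (g, id) (ys i)) = (\<lambda>i\<in>{..<m}. act n (\<one>\<^bsub>G\<^esub>, ?\<tau>' i) (Y i))"
    using top_action_drop_perm[OF grp top g \<tau>] ys PiE_mem[OF ys(1)]
    by (intro restrict_ext) (simp add: Y_def)
  then have "act ?N (g, id) (?\<gamma> x ys)
      = ?\<gamma> (act m (\<one>\<^bsub>G\<^esub>, ?\<sigma>') x) (\<lambda>i\<in>{..<m}. act n (\<one>\<^bsub>G\<^esub>, ?\<tau>' i) (Y i))"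
    using gamma_replicate_G_equivariant[OF x(1) ys(1) g] top_action_drop_perm[OF grp top g \<sigma> x(1)]
      x(2) by simp
  also have "\<dots> = act ?N (\<one>\<^bsub>G\<^esub>, wreath_perm m n id ?\<tau>') (?\<gamma> (act m (\<one>\<^bsub>G\<^esub>, ?\<sigma>') x) Y)"
    using gamma_replicate_block_sum[OF x' Y] permutes_inv[OF \<tau>] by simp
  also have "(\<lambda>j. Y (?\<sigma>' j)) = ys"
  proof
    fix j show "Y (?\<sigma>' j) = ys j"
      using permutes_inverses(1)[OF \<sigma>] permutes_less[OF permutes_inv[OF \<sigma>]]
        permutes_not_in[OF permutes_inv[OF \<sigma>]] PiE_arb[OF ys(1)]
      by (cases "j < m") (simp_all add: Y_def)
  qed
  then have "?\<gamma> (act m (\<one>\<^bsub>G\<^esub>, ?\<sigma>') x) Y = act ?N (\<one>\<^bsub>G\<^esub>, wreath_perm m n ?\<sigma>' (\<lambda>_. id)) (?\<gamma> x ys)"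
    using gamma_replicate_permute[OF x(1) Y permutes_inv[OF \<sigma>]] by simp
  finally show ?thesis .
qed

lemma gamma_replicate_fixed:
  assumes g: "g \<in> carrier G" and \<sigma>: "\<sigma> permutes {..<m}" and \<tau>: "\<And>i. i < m \<Longrightarrow> \<tau> i permutes {..<n}"
    and x: "x \<in> topspace (Op m)" "act m (g, \<sigma>) x = x"
    and ys: "ys \<in> PiE {..<m} (\<lambda>_. topspace (Op n))" "\<And>i. i < m \<Longrightarrow> act n (g, \<tau> i) (ys i) = ys (\<sigma> i)"
  shows "act (m * n) (g, wreath_perm m n \<sigma> \<tau>) (gamma (replicate m n) x ys)
    = gamma (replicate m n) x ys"
proof -
  let ?z = "gamma (replicate m n) x ys" and ?N = "m * n"
  let ?W = "wreath_perm m n \<sigma> \<tau>" and ?A = "wreath_perm m n id (\<lambda>i. Hilbert_Choice.inv (\<tau> i))"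
    and ?B = "wreath_perm m n (Hilbert_Choice.inv \<sigma>) (\<lambda>_. id)"
  note top = G_operad_top_action[OF operad]
  have z: "?z \<in> topspace (Op ?N)" by (rule gamma_replicate_closed[OF x(1) ys(1)])
  have W: "?W permutes {..<?N}" by (rule wreath_perm_permutes[OF \<sigma> \<tau>])
  have A: "?A permutes {..<?N}" by (rule wreath_perm_permutes[OF permutes_id permutes_inv[OF \<tau>]])
  have B: "?B permutes {..<?N}"
    by (rule wreath_perm_permutes[OF permutes_inv[OF \<sigma>]]) (rule permutes_id)
  have "act ?N (g, ?W) ?z = act ?N (\<one>\<^bsub>G\<^esub>, ?W) (act ?N (g, id) ?z)"
    using top_action_mult[OF top, of "(\<one>\<^bsub>G\<^esub>, ?W)" ?N "(g, id)"] g W z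
      group.is_monoid[OF G_operad_group[OF operad]] by simp
  also have "\<dots> = act ?N (\<one>\<^bsub>G\<^esub>, ?W) (act ?N (\<one>\<^bsub>G\<^esub>, ?A \<circ> ?B) ?z)"
    using gamma_replicate_G_act_eq_Sym_act[OF assms]
      top_action_mult[OF top, of "(\<one>\<^bsub>G\<^esub>, ?A)" ?N "(\<one>\<^bsub>G\<^esub>, ?B)"]
      A B z group.is_monoid[OF G_operad_group[OF operad]] by simp
  also have "\<dots> = act ?N (\<one>\<^bsub>G\<^esub>, ?W \<circ> (?A \<circ> ?B)) ?z"
    using top_action_mult[OF top, of "(\<one>\<^bsub>G\<^esub>, ?W)" ?N "(\<one>\<^bsub>G\<^esub>, ?A \<circ> ?B)"] W
      permutes_compose[OF B A] z group.is_monoid[OF G_operad_group[OF operad]] by simp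
  also have "?W \<circ> (?A \<circ> ?B) = id"
    using wreath_perm_inverse_factorization[OF \<sigma> \<tau>] by auto
  finally show ?thesis using top_action_one[OF top z] by (simp add: id_def)
qed

end

section \<open>Enumerations of finite sets with an action\<close>

lemma set_action_closed: "set_action G L T tact \<Longrightarrow> l \<in> L \<Longrightarrow> t \<in> T \<Longrightarrow> tact l t \<in> T"
  unfolding set_action_def by blast

lemma set_action_one: "set_action G L T tact \<Longrightarrow> t \<in> T \<Longrightarrow> tact \<one>\<^bsub>G\<^esub> t = t"
  unfolding set_action_def by blast

lemma set_action_mult:
  "set_action G L T tact \<Longrightarrow> l \<in> L \<Longrightarrow> l' \<in> L \<Longrightarrow> t \<in> T \<Longrightarrow> tact (l \<otimes>\<^bsub>G\<^esub> l') t = tact l (tact l' t)"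
  unfolding set_action_def by blast

lemma set_action_bij_betw:
  assumes "group G" "subgroup L G" "set_action G L T tact" "l \<in> L"
  shows "bij_betw (tact l) T T"
proof -
  interpret group G by fact
  have "tact l' (tact l'' t) = t" if "l' \<in> L" "l'' \<in> L" "l' \<otimes>\<^bsub>G\<^esub> l'' = \<one>\<^bsub>G\<^esub>" "t \<in> T" for l' l'' t
    using set_action_mult[OF assms(3) that(1,2,4)] set_action_one[OF assms(3) that(4)] that(3)
    by simp
  moreover have "inv\<^bsub>G\<^esub> l \<in> L" "l \<otimes>\<^bsub>G\<^esub> inv\<^bsub>G\<^esub> l = \<one>\<^bsub>G\<^esub>" "inv\<^bsub>G\<^esub> l \<otimes>\<^bsub>G\<^esub> l = \<one>\<^bsub>G\<^esub>"
    using assms(2,4) by (auto simp: subgroup.m_inv_closed subgroup.mem_carrier)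
  ultimately show ?thesis using assms(4)
    by (intro bij_betw_byWitness[where f' = "tact (inv\<^bsub>G\<^esub> l)"])
      (auto intro: set_action_closed[OF assms(3)])
qed

lemma perm_via_inv_into:
  assumes "set_action G L T tact" "bij_betw f T {..<card T}" "l \<in> L" "p < card T"
  shows "inv_into T f (perm_via T f tact l p) = tact l (inv_into T f p)"
proof -
  have "tact l (inv_into T f p) \<in> T"
    using assms by (metis bij_betw_imp_surj_on inv_into_into lessThan_iff set_action_closed)
  then show ?thesis using assms(2,4) by (simp add: perm_via_def bij_betw_inv_into_left)
qed

lemma perm_via_permutes:
  assumes "group G" "subgroup L G" "set_action G L T tact" "bij_betw f T {..<card T}" "l \<in> L"
  shows "perm_via T f tact l permutes {..<card T}"
proof (rule bij_imp_permutes)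
  have "bij_betw (f \<circ> tact l \<circ> inv_into T f) {..<card T} {..<card T}"
    using assms by (meson bij_betw_inv_into bij_betw_trans set_action_bij_betw)
  then show "bij_betw (perm_via T f tact l) {..<card T} {..<card T}"
    by (rule bij_betw_cong[THEN iffD1, rotated]) (simp add: perm_via_def)
qed (simp add: perm_via_def)

lemma perm_via_enumeration:
  assumes "bij_betw E {..<card I} I" "\<And>p. p < card I \<Longrightarrow> tact l (E p) = E (\<pi> p)"
    and "\<pi> permutes {..<card I}"
  shows "perm_via I (inv_into {..<card I} E) tact l = \<pi>"
proof
  fix p show "perm_via I (inv_into {..<card I} E) tact l p = \<pi> p"
  proof (cases "p < card I")
    case True
    then have "inv_into I (inv_into {..<card I} E) p = E p"
      using assms(1) by (simp add: inv_into_inv_into_eq)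
    then show ?thesis using True assms(2) permutes_less[OF assms(3) True] assms(1)
      by (simp add: perm_via_def bij_betw_inv_into_left)
  qed (simp add: perm_via_def permutes_not_in[OF assms(3)])
qed

lemma admissibleI:
  assumes "bij_betw E {..<card T} T" "z \<in> topspace (Op (card T))"
    and "\<And>l. l \<in> L \<Longrightarrow> act (card T) (l, perm_via T (inv_into {..<card T} E) tact l) z = z"
  shows "admissible Op act L T tact"
  unfolding admissible_def fixset_def graph_of_def
  using bij_betw_inv_into[OF assms(1)] assms(2,3) by blast

section \<open>The induced set \<open>H \<times>\<^sub>K T\<close>\<close>

locale induced_set = group G for G :: "('g, 'm) monoid_scheme" (structure) +
  fixes H K :: "'g set" and T :: "'b set" and tact :: "'g \<Rightarrow> 'b \<Rightarrow> 'b"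
  assumes subgroup_H: "subgroup H G" and subgroup_K: "subgroup K G"
    and set_action: "set_action G K T tact"
begin

lemma H_carrier: "h \<in> H \<Longrightarrow> h \<in> carrier G"
  by (rule subgroup.mem_carrier[OF subgroup_H])

lemma K_carrier: "k \<in> K \<Longrightarrow> k \<in> carrier G"
  by (rule subgroup.mem_carrier[OF subgroup_K])

lemma l_coset_self: "a \<in> carrier G \<Longrightarrow> a \<in> a <# K"
  unfolding l_coset_def using subgroup.one_closed[OF subgroup_K] r_one by force

lemma l_coset_eqD:
  assumes "a \<in> carrier G" "a <# K = b <# K"
  obtains k where "k \<in> K" "a = b \<otimes> k"
  using l_coset_self[OF assms(1)] assms(2) unfolding l_coset_def by blast

lemma coset_set_action: "set_action G H (coset_set G H K) (coset_act G)"
proof -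
  have K: "K \<subseteq> carrier G" by (rule subgroup.subset[OF subgroup_K])
  have "a <# K \<subseteq> carrier G" if "a \<in> H" for a using l_coset_subset_G[OF K H_carrier[OF that]] .
  then show ?thesis
    unfolding set_action_def coset_set_def coset_act_def
    using lcos_m_assoc[OF K] H_carrier subgroup.m_closed[OF subgroup_H] lcos_mult_one
    by (auto simp: m_assoc)
qed

lemma ind_class_image: "ind_class G K tact a t = (\<lambda>k. (a \<otimes> inv k, tact k t)) ` K"
  by (auto simp: ind_class_def)

lemma ind_class_mult_right:
  assumes a: "a \<in> carrier G" and k: "k \<in> K" and t: "t \<in> T"
  shows "ind_class G K tact (a \<otimes> k) t = ind_class G K tact a (tact k t)"
proof -
  have Kk: "(\<lambda>k'. k' \<otimes> k) ` K = K"
    using subgroup.rcos_const[OF subgroup_K is_group k] by (auto simp: r_coset_def)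
  have "ind_class G K tact (a \<otimes> k) t = (\<lambda>k'. (a \<otimes> k \<otimes> inv k', tact k' t)) ` ((\<lambda>k'. k' \<otimes> k) ` K)"
    by (simp only: Kk ind_class_image)
  also have "\<dots> = (\<lambda>k'. (a \<otimes> k \<otimes> inv (k' \<otimes> k), tact (k' \<otimes> k) t)) ` K"
    by (simp only: image_image)
  also have "\<dots> = (\<lambda>k'. (a \<otimes> inv k', tact k' (tact k t))) ` K"
  proof (rule image_cong[OF refl])
    fix k' assume k': "k' \<in> K"
    have "a \<otimes> k \<otimes> inv (k' \<otimes> k) = a \<otimes> inv k'"
      using a K_carrier[OF k] K_carrier[OF k']
      by (simp add: inv_mult_group m_assoc) (simp add: m_assoc[symmetric])
    then show "(a \<otimes> k \<otimes> inv (k' \<otimes> k), tact (k' \<otimes> k) t) = (a \<otimes> inv k', tact k' (tact k t))"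
      using set_action_mult[OF set_action k' k t] by simp
  qed
  finally show ?thesis unfolding ind_class_image .
qed

lemma ind_act_ind_class:
  "h \<in> carrier G \<Longrightarrow> a \<in> carrier G
    \<Longrightarrow> ind_act G h (ind_class G K tact a t) = ind_class G K tact (h \<otimes> a) t"
  unfolding ind_act_def ind_class_image image_image
  by (intro image_cong refl) (simp add: m_assoc K_carrier)

lemma ind_class_eqD:
  assumes "ind_class G K tact a t = ind_class G K tact b u" "a \<in> carrier G" "t \<in> T"
  obtains k where "k \<in> K" "a = b \<otimes> inv k" "t = tact k u"
proof -
  have "(a, t) = (a \<otimes> inv \<one>, tact \<one> t)"
    using assms(2) set_action_one[OF set_action assms(3)] by simp
  then have "(a, t) \<in> ind_class G K tact a t"
    unfolding ind_class_image using subgroup.one_closed[OF subgroup_K] by blast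
  then have "(a, t) \<in> ind_class G K tact b u" by (simp only: assms(1))
  then show ?thesis using that unfolding ind_class_image by blast
qed

lemma bij_betw_ind_class:
  assumes reps: "bij_betw (\<lambda>i. r i <# K) A (coset_set G H K)" "r ` A \<subseteq> H"
  shows "bij_betw (\<lambda>(i, t). ind_class G K tact (r i) t) (A \<times> T) (ind_set G H K T tact)"
proof -
  have r: "r i \<in> carrier G" if "i \<in> A" for i using reps(2) that H_carrier by blast
  have "inj_on (\<lambda>(i, t). ind_class G K tact (r i) t) (A \<times> T)"
  proof (rule inj_onI, clarify)
    fix i t j u assume ij: "i \<in> A" "j \<in> A" and tu: "t \<in> T" "u \<in> T"
      and eq: "ind_class G K tact (r i) t = ind_class G K tact (r j) u"
    obtain k where k: "k \<in> K" "r i = r j \<otimes> inv k" "t = tact k u"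
      using ind_class_eqD[OF eq r[OF ij(1)] tu(1)] .
    have "r i \<in> r j <# K"
      unfolding l_coset_def using k(2) subgroup.m_inv_closed[OF subgroup_K k(1)] by blast
    then have "r i <# K = r j <# K" using l_repr_independence[OF _ r[OF ij(2)] subgroup_K] by simp
    then have "i = j" using inj_onD[OF bij_betw_imp_inj_on[OF reps(1)] _ ij] by simp
    then have "k = \<one>" using k(2) r[OF ij(2)] K_carrier[OF k(1)] by simp
    then show "i = j \<and> t = u" using \<open>i = j\<close> k(3) set_action_one[OF set_action tu(2)] by simp
  qed
  moreover have "(\<lambda>(i, t). ind_class G K tact (r i) t) ` (A \<times> T) = ind_set G H K T tact"
  proof (intro equalityI subsetI)
    fix c assume "c \<in> (\<lambda>(i, t). ind_class G K tact (r i) t) ` (A \<times> T)"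
    then obtain i t where "i \<in> A" "t \<in> T" "c = ind_class G K tact (r i) t" by blast
    then show "c \<in> ind_set G H K T tact" using reps(2) unfolding ind_set_def by blast
  next
    fix c assume "c \<in> ind_set G H K T tact"
    then obtain a t where a: "a \<in> H" and t: "t \<in> T" and c: "c = ind_class G K tact a t"
      unfolding ind_set_def by blast
    have "a <# K \<in> (\<lambda>i. r i <# K) ` A"
      using a bij_betw_imp_surj_on[OF reps(1)] unfolding coset_set_def by blast
    then obtain i where i: "i \<in> A" "a <# K = r i <# K" by blast
    then obtain k where k: "k \<in> K" "a = r i \<otimes> k" using l_coset_eqD H_carrier[OF a] by blast
    have "c = ind_class G K tact (r i) (tact k t)"
      unfolding c k(2) by (rule ind_class_mult_right[OF r[OF i(1)] k(1) t])
    then show "c \<in> (\<lambda>(i, t). ind_class G K tact (r i) t) ` (A \<times> T)"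
      using i(1) set_action_closed[OF set_action k(1) t] by (auto intro: rev_image_eqI)
  qed
  ultimately show ?thesis by (simp add: bij_betw_def)
qed

end

locale enumerated_induced_set = induced_set +
  fixes f1 :: "'g set \<Rightarrow> nat" and f2 :: "'b \<Rightarrow> nat"
  assumes bij_f1: "bij_betw f1 (coset_set G H K) {..<card (coset_set G H K)}"
    and bij_f2: "bij_betw f2 T {..<card T}"
begin

definition rep :: "nat \<Rightarrow> 'g" where
  "rep i = (SOME a. a \<in> H \<and> a <# K = inv_into (coset_set G H K) f1 i)"

definition enum :: "nat \<Rightarrow> ('g \<times> 'b) set" where
  "enum p = ind_class G K tact (rep (p div card T)) (inv_into T f2 (p mod card T))"

definition coset_perm :: "'g \<Rightarrow> nat \<Rightarrow> nat" where
  "coset_perm h = perm_via (coset_set G H K) f1 (coset_act G) h"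

definition twist :: "'g \<Rightarrow> nat \<Rightarrow> 'g" where
  "twist h i = inv (rep (coset_perm h i)) \<otimes> h \<otimes> rep i"

lemma
  assumes "i < card (coset_set G H K)"
  shows rep_mem: "rep i \<in> H" and l_coset_rep: "rep i <# K = inv_into (coset_set G H K) f1 i"
proof -
  have "inv_into (coset_set G H K) f1 i \<in> coset_set G H K"
    using bij_betwE[OF bij_betw_inv_into[OF bij_f1]] assms by blast
  then obtain a where "a \<in> H \<and> a <# K = inv_into (coset_set G H K) f1 i"
    unfolding coset_set_def by force
  then have "rep i \<in> H \<and> rep i <# K = inv_into (coset_set G H K) f1 i"
    unfolding rep_def by (rule someI)
  then show "rep i \<in> H" "rep i <# K = inv_into (coset_set G H K) f1 i" by simp_all
qed

lemma bij_betw_enum: "bij_betw enum {..<card (coset_set G H K) * card T} (ind_set G H K T tact)"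
proof -
  let ?m = "card (coset_set G H K)" and ?n = "card T"
  have "bij_betw (\<lambda>i. rep i <# K) {..<?m} (coset_set G H K)"
    using bij_betw_inv_into[OF bij_f1]
    by (rule bij_betw_cong[THEN iffD2, rotated]) (simp add: l_coset_rep)
  then have "bij_betw (\<lambda>(i, t). ind_class G K tact (rep i) t) ({..<?m} \<times> T) (ind_set G H K T tact)"
    by (rule bij_betw_ind_class) (use rep_mem in auto)
  moreover have "bij_betw (map_prod id (inv_into T f2)) ({..<?m} \<times> {..<?n}) ({..<?m} \<times> T)"
    by (rule bij_betw_map_prod[OF bij_betw_id bij_betw_inv_into[OF bij_f2]])
  ultimately have "bij_betw ((\<lambda>(i, t). ind_class G K tact (rep i) t) \<circ> map_prod id (inv_into T f2)
      \<circ> (\<lambda>p. (p div ?n, p mod ?n))) {..<?m * ?n} (ind_set G H K T tact)"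
    using bij_betw_div_mod by (blast intro: bij_betw_trans)
  then show ?thesis by (simp add: enum_def[abs_def] comp_def)
qed

lemma card_ind_set: "card (ind_set G H K T tact) = card (coset_set G H K) * card T"
  using bij_betw_same_card[OF bij_betw_enum] by simp

lemma enum_mult_add:
  "u < card T \<Longrightarrow> enum (i * card T + u) = ind_class G K tact (rep i) (inv_into T f2 u)"
  by (simp add: enum_def)

lemma coset_perm_permutes: "h \<in> H \<Longrightarrow> coset_perm h permutes {..<card (coset_set G H K)}"
  unfolding coset_perm_def
  by (rule perm_via_permutes[OF is_group subgroup_H coset_set_action bij_f1])

lemma
  assumes h: "h \<in> H" and i: "i < card (coset_set G H K)"
  shows twist_mem: "twist h i \<in> K" and mult_rep_eq: "h \<otimes> rep i = rep (coset_perm h i) \<otimes> twist h i"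
proof -
  let ?j = "coset_perm h i"
  have j: "?j < card (coset_set G H K)" using permutes_less[OF coset_perm_permutes[OF h] i] .
  have rep_carrier: "rep i \<in> carrier G" "rep ?j \<in> carrier G"
    using H_carrier rep_mem i j by blast+
  have "rep ?j <# K = coset_act G h (rep i <# K)"
    using perm_via_inv_into[OF coset_set_action bij_f1 h i] l_coset_rep[OF i] l_coset_rep[OF j]
    by (simp add: coset_perm_def)
  also have "\<dots> = (h \<otimes> rep i) <# K"
    unfolding coset_act_def
    by (rule lcos_m_assoc[OF subgroup.subset[OF subgroup_K] H_carrier[OF h] rep_carrier(1)])
  finally obtain k where k: "k \<in> K" "h \<otimes> rep i = rep ?j \<otimes> k"
    using l_coset_eqD H_carrier[OF h] rep_carrier by (metis m_closed)
  moreover have "twist h i = k"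
    using k H_carrier[OF h] rep_carrier K_carrier[OF k(1)]
    by (simp add: twist_def m_assoc) (simp add: m_assoc[symmetric])
  ultimately show "twist h i \<in> K" "h \<otimes> rep i = rep ?j \<otimes> twist h i" by simp_all
qed

lemma twist_perm_permutes:
  "h \<in> H \<Longrightarrow> i < card (coset_set G H K) \<Longrightarrow> perm_via T f2 tact (twist h i) permutes {..<card T}"
  by (rule perm_via_permutes[OF is_group subgroup_K set_action bij_f2 twist_mem])

lemma translate_rep_fixed_point:
  assumes "top_action (G \<times>\<times> Sym (card T)) X a" "y \<in> fixset (graph_of K T f2 tact) a X"
    and h: "h \<in> H" and i: "i < card (coset_set G H K)"
  shows "a (h, perm_via T f2 tact (twist h i)) (a (rep i, id) y) = a (rep (coset_perm h i), id) y"
proof (rule top_action_translate_fixed_point[OF is_group assms(1) _ K_carrier[OF twist_mem[OF h i]]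
      twist_perm_permutes[OF h i] _ H_carrier[OF h] _ _ mult_rep_eq[OF h i]])
  show "y \<in> topspace X" "a (twist h i, perm_via T f2 tact (twist h i)) y = y"
    using assms(2) twist_mem[OF h i] unfolding fixset_def graph_of_def by blast+
  show "rep i \<in> carrier G" "rep (coset_perm h i) \<in> carrier G"
    using rep_mem i permutes_less[OF coset_perm_permutes[OF h] i] H_carrier by blast+
qed

lemma perm_via_ind_set:
  assumes h: "h \<in> H"
  shows "perm_via (ind_set G H K T tact) (inv_into {..<card (ind_set G H K T tact)} enum)
      (ind_act G) h
    = wreath_perm (card (coset_set G H K)) (card T) (coset_perm h)
      (\<lambda>i. perm_via T f2 tact (twist h i))"
proof (rule perm_via_enumeration)
  let ?m = "card (coset_set G H K)" and ?n = "card T"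
  let ?W = "wreath_perm ?m ?n (coset_perm h) (\<lambda>i. perm_via T f2 tact (twist h i))"
  show "bij_betw enum {..<card (ind_set G H K T tact)} (ind_set G H K T tact)"
    using bij_betw_enum by (simp add: card_ind_set)
  show "?W permutes {..<card (ind_set G H K T tact)}"
    unfolding card_ind_set
    by (rule wreath_perm_permutes[OF coset_perm_permutes[OF h] twist_perm_permutes[OF h]])
  fix p assume "p < card (ind_set G H K T tact)"
  then obtain i u where iu: "i < ?m" "u < ?n" "p = i * ?n + u"
    unfolding card_ind_set by (rule less_mult_cases)
  let ?j = "coset_perm h i" and ?t = "inv_into T f2 u"
  have j: "?j < ?m" using permutes_less[OF coset_perm_permutes[OF h] iu(1)] .
  have t: "?t \<in> T" using bij_f2 iu(2) by (metis bij_betw_imp_surj_on inv_into_into lessThan_iff)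
  have "ind_act G h (enum p) = ind_class G K tact (rep ?j \<otimes> twist h i) ?t"
    using ind_act_ind_class H_carrier h rep_mem[OF iu(1)] mult_rep_eq[OF h iu(1)]
    by (simp add: iu(3) enum_mult_add[OF iu(2)])
  also have "\<dots> = ind_class G K tact (rep ?j) (tact (twist h i) ?t)"
    using ind_class_mult_right H_carrier[OF rep_mem[OF j]] twist_mem[OF h iu(1)] t by blast
  also have "\<dots> = enum (?W p)"
    using perm_via_inv_into[OF set_action bij_f2 twist_mem[OF h iu(1)] iu(2)]
      permutes_less[OF twist_perm_permutes[OF h iu(1)] iu(2)]
    by (simp add: iu wreath_perm_mult_add enum_mult_add)
  finally show "ind_act G h (enum p) = enum (?W p)" .
qed

end

theorem mainTheorem5:
  fixes G :: "('g, 'm) monoid_scheme"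
    and Op :: "nat \<Rightarrow> 'a topology"
    and act :: "nat \<Rightarrow> 'g \<times> (nat \<Rightarrow> nat) \<Rightarrow> 'a \<Rightarrow> 'a"
    and e :: 'a
    and gamma :: "nat list \<Rightarrow> 'a \<Rightarrow> (nat \<Rightarrow> 'a) \<Rightarrow> 'a"
    and H K :: "'g set"
    and T :: "'b set"
    and tact :: "'g \<Rightarrow> 'b \<Rightarrow> 'b"
  assumes "group G" and "finite (carrier G)"
    and "N_infty_operad G Op act e gamma"
    and "subgroup H G" and "subgroup K G" and "K \<subseteq> H"
    and "finite T" and "set_action G K T tact"
    and "admissible Op act H (coset_set G H K) (coset_act G)"
    and "admissible Op act K T tact"
  shows "admissible Op act H (ind_set G H K T tact) (ind_act G)"
proof -
  let ?m = "card (coset_set G H K)" and ?n = "card T"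
  obtain f1 x where f1: "bij_betw f1 (coset_set G H K) {..<?m}"
    and x: "x \<in> fixset (graph_of H (coset_set G H K) f1 (coset_act G)) (act ?m) (Op ?m)"
    using assms(9) unfolding admissible_def by blast
  obtain f2 y where f2: "bij_betw f2 T {..<?n}"
    and y: "y \<in> fixset (graph_of K T f2 tact) (act ?n) (Op ?n)"
    using assms(10) unfolding admissible_def by blast
  interpret enumerated_induced_set G H K T tact f1 f2
    using assms(1,4,5,8) f1 f2 by (simp add: enumerated_induced_set_def
        enumerated_induced_set_axioms_def induced_set_def induced_set_axioms_def)
  have operad: "G_operad G Op act e gamma" using assms(3) by (simp add: N_infty_operad_def)
  note top = G_operad_top_action[OF operad]
  define ys where "ys = (\<lambda>i\<in>{..<?m}. act ?n (rep i, id) y)"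
  have ys: "ys \<in> PiE {..<?m} (\<lambda>_. topspace (Op ?n))"
    using y rep_mem top_action_closed[OF top] H_carrier
    by (auto simp: ys_def fixset_def permutes_id)
  have x': "x \<in> topspace (Op ?m)" "\<And>h. h \<in> H \<Longrightarrow> act ?m (h, coset_perm h) x = x"
    using x by (auto simp: fixset_def graph_of_def coset_perm_def)
  show ?thesis
  proof (rule admissibleI[OF bij_betw_enum[folded card_ind_set]])
    show "gamma (replicate ?m ?n) x ys \<in> topspace (Op (card (ind_set G H K T tact)))"
      unfolding card_ind_set by (rule gamma_replicate_closed[OF operad x'(1) ys])
    fix h assume h: "h \<in> H"
    show "act (card (ind_set G H K T tact)) (h, perm_via (ind_set G H K T tact)
        (inv_into {..<card (ind_set G H K T tact)} enum) (ind_act G) h)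
        (gamma (replicate ?m ?n) x ys) = gamma (replicate ?m ?n) x ys"
      unfolding perm_via_ind_set[OF h] unfolding card_ind_set
    proof (rule gamma_replicate_fixed[OF operad H_carrier[OF h] coset_perm_permutes[OF h] _
          x'(1) x'(2)[OF h] ys])
      show "perm_via T f2 tact (twist h i) permutes {..<?n}" if "i < ?m" for i
        using twist_perm_permutes[OF h that] .
      show "act ?n (h, perm_via T f2 tact (twist h i)) (ys i) = ys (coset_perm h i)"
        if "i < ?m" for i
        using translate_rep_fixed_point[OF top y h that] that
          permutes_less[OF coset_perm_permutes[OF h] that]
        by (simp add: ys_def)
    qed
  qed
qed

end
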